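(* Let $\Omega \subset \mathbb{R}^N$ be open and bounded, $\alpha \in (0,N)$, and $\beta \in (0,N]$. There exist constants $c,C>0$, depending only on $\alpha$, $N$, $\beta$ and $\Omega$, such that \[ \mathcal{H}^{\beta}_{\infty}(\{x\in \Omega:|I_{\alpha}f(x)|>t\})\leq Ce^{-ct^{\frac{N}{N-\alpha}}}\qquad\text{for all } t>0 \] and for all $f \in L^{N/\alpha}(\Omega)$ with $\|f\|_{L^{N/\alpha}(\Omega)}\leq 1$.
   Context: For $\alpha\in(0,N)$ the Riesz potential is $I_\alpha f(x) = \frac{1}{\gamma(\alpha)}\int_{\mathbb{R}^N} \frac{f(y)}{|x-y|^{N-\alpha}}\,dy$ with $\gamma(\alpha)=\pi^{N/2}2^{\alpha}\Gamma(\alpha/2)\Gamma((N-\alpha)/2)^{-1}$; a function defined on $\Omega$ is extended by zero outside $\Omega$. For $E\subset\mathbb{R}^N$ and $\beta>0$ the Hausdorff content is $\mathcal{H}_{\infty}^{\beta}(E):=\inf\{\sum_{i=1}^\infty \omega_{\beta} r_i^{\beta}:E\subset \bigcup_{i=1}^\infty B(x_i,r_i)\}$, the infimum over all countable coverings by balls of arbitrary radii, where $\omega_{\beta} = \pi^{\beta/2}/\Gamma(\frac{\beta}{2}+1)$. *)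

theory Defs
  imports "HOL-Analysis.Analysis"
begin

definition riesz_gamma :: "nat \<Rightarrow> real \<Rightarrow> real" where
  "riesz_gamma N \<alpha> = pi powr (real N / 2) * 2 powr \<alpha> * Gamma (\<alpha> / 2) / Gamma ((real N - \<alpha>) / 2)"

text \<open>Kernel integrand of I_alpha f at x (f extended by zero outside Omega; integral over Omega).\<close>
definition riesz_kernel :: "real \<Rightarrow> ('a::euclidean_space \<Rightarrow> real) \<Rightarrow> 'a \<Rightarrow> 'a \<Rightarrow> real" where
  "riesz_kernel \<alpha> f x y = f y / norm (x - y) powr (real DIM('a) - \<alpha>)"

definition riesz_potential :: "real \<Rightarrow> 'a::euclidean_space set \<Rightarrow> ('a \<Rightarrow> real) \<Rightarrow> 'a \<Rightarrow> real" where
  "riesz_potential \<alpha> \<Omega> f x =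
     (1 / riesz_gamma DIM('a) \<alpha>) * (LINT y:\<Omega>|lebesgue. riesz_kernel \<alpha> f x y)"

text \<open>Superlevel set {x in Omega. |I_alpha f(x)| > t}; points where the defining integral
  does not converge absolutely are counted as belonging to the set (|I_alpha f(x)| = infinity).\<close>
definition riesz_superlevel :: "real \<Rightarrow> 'a::euclidean_space set \<Rightarrow> ('a \<Rightarrow> real) \<Rightarrow> real \<Rightarrow> 'a set" where
  "riesz_superlevel \<alpha> \<Omega> f t =
     {x \<in> \<Omega>. \<not> set_integrable lebesgue \<Omega> (riesz_kernel \<alpha> f x)
              \<or> \<bar>riesz_potential \<alpha> \<Omega> f x\<bar> > t}"

definition omega_const :: "real \<Rightarrow> real" where
  "omega_const \<beta> = pi powr (\<beta> / 2) / Gamma (\<beta> / 2 + 1)"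

definition hausdorff_content :: "real \<Rightarrow> 'a::euclidean_space set \<Rightarrow> ennreal" where
  "hausdorff_content \<beta> E =
     Inf {(\<Sum>i. ennreal (omega_const \<beta> * r i powr \<beta>)) | (c :: nat \<Rightarrow> 'a) (r :: nat \<Rightarrow> real).
            (\<forall>i. r i > 0) \<and> E \<subseteq> (\<Union>i. ball (c i) (r i))}"

end

theory Submission
  imports Defs
begin

text \<open>
  Let \<open>p = N / \<alpha>\<close> and let \<open>D\<close> bound the diameter of \<open>\<Omega>\<close>. Fix a level \<open>M\<close> and call
  \<open>x\<close> good if the mass of \<open>\<bar>f\<bar> powr p\<close> in the ball of radius \<open>D / 2 ^ (M + k)\<close> around \<open>x\<close>
  is at most \<open>2 powr (- k \<beta>)\<close> for every \<open>k\<close>. At a good point, split the Riesz kernel into the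
  dyadic annuli \<open>D / 2 ^ (n + 1) \<le> \<bar>x - y\<bar> < D / 2 ^ n\<close> and apply Young's inequality on each
  annulus, with weight \<open>M powr (- 1 / p)\<close> on the first \<open>M\<close> annuli and \<open>2 powr (- (n - M) \<beta> / p)\<close>
  on the others: this gives \<open>\<bar>I\<^sub>\<alpha> f x\<bar> \<le> A + B M powr ((N - \<alpha>) / N)\<close>. Every bad point is the
  centre of a ball witnessing its badness; Vitali's covering lemma extracts disjoint witnesses, whose
  masses add up to at most 1, so the bad points have Hausdorff content at most
  \<open>\<omega>\<^sub>\<beta> (5 D) powr \<beta> 2 powr (- M \<beta>)\<close>. Choosing \<open>M\<close> of order \<open>((t - A) / B) powr (N / (N - \<alpha>))\<close>
  gives the exponential bound for large \<open>t\<close>; for small \<open>t\<close> the content of a ball containing \<open>\<Omega>\<close>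
  suffices.
\<close>

lemma omega_const_pos: "0 < \<beta> \<Longrightarrow> 0 < omega_const \<beta>"
  unfolding omega_const_def by (intro divide_pos_pos) (auto intro: Gamma_real_pos)

lemma hausdorff_content_mono: "E \<subseteq> F \<Longrightarrow> hausdorff_content \<beta> E \<le> hausdorff_content \<beta> F"
  unfolding hausdorff_content_def by (rule Inf_superset_mono) blast

lemma hausdorff_content_le_countable_cover:
  fixes E :: "'a::euclidean_space set" and I :: "'i set" and a :: "'i \<Rightarrow> 'a"
  assumes "0 < \<beta>" and "countable I" and rpos: "\<And>i. i \<in> I \<Longrightarrow> 0 < \<rho> i"
    and cover: "E \<subseteq> (\<Union>i\<in>I. ball (a i) (\<rho> i))"
    and finite_sums: "\<And>J. finite J \<Longrightarrow> J \<subseteq> I \<Longrightarrow> (\<Sum>i\<in>J. omega_const \<beta> * \<rho> i powr \<beta>) \<le> X"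
  shows "hausdorff_content \<beta> E \<le> ennreal X"
proof (rule ennreal_le_epsilon)
  fix e :: real assume "0 < e"
  define \<omega> where "\<omega> = omega_const \<beta>"
  have "0 < \<omega>" using omega_const_pos[OF \<open>0 < \<beta>\<close>] by (simp add: \<omega>_def)
  define h where "h = to_nat_on I"
  define g where "g = inv_into I h"
  have "inj_on h I" unfolding h_def using \<open>countable I\<close> by (rule inj_on_to_nat_on)
  then have gh: "\<And>i. i \<in> I \<Longrightarrow> g (h i) = i" by (simp add: g_def)
  \<comment> \<open>Reindex the cover by \<open>\<nat>\<close>, filling the unused indices with balls of total content \<open>\<le> e\<close>.\<close>
  define r where "r n = (if n \<in> h ` I then \<rho> (g n) else (e / (\<omega> * 2 ^ Suc n)) powr (1 / \<beta>))" for n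
  define c where "c n = (if n \<in> h ` I then a (g n) else 0)" for n
  have r_pos: "\<forall>n. 0 < r n" using \<open>0 < e\<close> \<open>0 < \<omega>\<close> gh rpos by (auto simp: r_def)
  have cover': "E \<subseteq> (\<Union>n. ball (c n) (r n))"
  proof
    fix x assume "x \<in> E"
    then obtain i where "i \<in> I" "x \<in> ball (a i) (\<rho> i)" using cover by auto
    then have "x \<in> ball (c (h i)) (r (h i))" by (auto simp: c_def r_def gh)
    then show "x \<in> (\<Union>n. ball (c n) (r n))" by auto
  qed
  define t where "t n = \<omega> * r n powr \<beta>" for n
  have t_padding: "t n = e / 2 ^ Suc n" if "n \<notin> h ` I" for n
    using that \<open>0 < e\<close> \<open>0 < \<omega>\<close> \<open>0 < \<beta>\<close> by (simp add: t_def r_def powr_powr)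
  have partial_sums: "(\<Sum>n<m. t n) \<le> X + e" for m
  proof -
    define J where "J = {i \<in> I. h i < m}"
    have hJ: "h ` J = {..<m} \<inter> h ` I" by (auto simp: J_def)
    have "inj_on h J" using \<open>inj_on h I\<close> by (rule inj_on_subset) (auto simp: J_def)
    moreover have "finite J" using \<open>inj_on h J\<close> hJ by (metis finite_Int finite_imageD finite_lessThan)
    ultimately have "(\<Sum>n\<in>{..<m} \<inter> h ` I. t n) = (\<Sum>i\<in>J. omega_const \<beta> * \<rho> i powr \<beta>)"
      by (simp add: hJ[symmetric] sum.reindex t_def r_def J_def gh \<omega>_def)
    also have "\<dots> \<le> X" using finite_sums \<open>finite J\<close> by (auto simp: J_def)
    finally have "(\<Sum>n\<in>{..<m} \<inter> h ` I. t n) \<le> X" .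
    moreover have "(\<Sum>n\<in>{..<m} - h ` I. t n) \<le> (\<Sum>n<m. e / 2 ^ Suc n)"
      by (rule order_trans[OF sum_mono sum_mono2]) (use \<open>0 < e\<close> in \<open>auto simp: t_padding\<close>)
    moreover have "(\<Sum>n<m. e / 2 ^ Suc n) = e * (1 - 1 / 2 ^ m)"
      by (induction m) (auto simp: field_simps)
    moreover have "(\<Sum>n<m. t n) = (\<Sum>n\<in>{..<m} \<inter> h ` I. t n) + (\<Sum>n\<in>{..<m} - h ` I. t n)"
      by (metis Diff_eq finite_lessThan sum.Int_Diff)
    ultimately show ?thesis using \<open>0 < e\<close> by (smt (verit) mult_left_le divide_nonneg_nonneg zero_le_power)
  qed
  have "hausdorff_content \<beta> E \<le> (\<Sum>n. ennreal (omega_const \<beta> * r n powr \<beta>))"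
    unfolding hausdorff_content_def by (rule Inf_lower) (use r_pos cover' in blast)
  also have "\<dots> \<le> ennreal (X + e)"
  proof (rule suminf_le_const)
    show "summable (\<lambda>n. ennreal (omega_const \<beta> * r n powr \<beta>))" by simp
    fix m
    have "\<And>n. 0 \<le> t n" using \<open>0 < \<omega>\<close> by (simp add: t_def)
    then show "(\<Sum>n<m. ennreal (omega_const \<beta> * r n powr \<beta>)) \<le> ennreal (X + e)"
      using partial_sums[of m] by (simp add: t_def \<omega>_def sum_ennreal ennreal_leI)
  qed
  also have "\<dots> \<le> ennreal X + ennreal e" using \<open>0 < e\<close> by (auto simp: ennreal_plus_if intro: ennreal_leI)
  finally show "hausdorff_content \<beta> E \<le> ennreal X + ennreal e" .
qed

lemma hausdorff_content_le_ball:
  fixes E :: "'a::euclidean_space set"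
  assumes "0 < \<beta>" "0 < R" "E \<subseteq> ball a R"
  shows "hausdorff_content \<beta> E \<le> ennreal (omega_const \<beta> * R powr \<beta>)"
proof (rule hausdorff_content_le_countable_cover[of \<beta> "UNIV :: unit set" "\<lambda>_. R" _ "\<lambda>_. a"])
  fix J :: "unit set"
  have "card J \<le> 1" using card_mono[of UNIV J] by simp
  moreover have "0 < omega_const \<beta> * R powr \<beta>" using assms omega_const_pos by simp
  ultimately show "(\<Sum>i\<in>J. omega_const \<beta> * R powr \<beta>) \<le> omega_const \<beta> * R powr \<beta>"
    by (simp add: mult_left_le_one_le)
qed (use assms in auto)

definition dyadic_mass_decay :: "real \<Rightarrow> real \<Rightarrow> ('a::euclidean_space \<Rightarrow> ennreal) \<Rightarrow> 'a \<Rightarrow> bool" where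
  "dyadic_mass_decay \<beta> r G x \<longleftrightarrow>
     (\<forall>k::nat. (\<integral>\<^sup>+y. G y * indicator (ball x (r / 2 ^ k)) y \<partial>lebesgue) \<le> ennreal (2 powr (- real k * \<beta>)))"

lemma hausdorff_content_not_dyadic_mass_decay_le:
  fixes G :: "'a::euclidean_space \<Rightarrow> ennreal"
  assumes "0 < \<beta>" "0 < r" and G: "G \<in> borel_measurable lebesgue" and "integral\<^sup>N lebesgue G \<le> 1"
  shows "hausdorff_content \<beta> {x. \<not> dyadic_mass_decay \<beta> r G x} \<le> ennreal (omega_const \<beta> * (5 * r) powr \<beta>)"
proof -
  define rad where "rad i = r / 2 ^ snd i" for i :: "'a \<times> nat"
  define B where "B i = ball (fst i) (rad i)" for i
  define K where "K = {i. ennreal (2 powr (- real (snd i) * \<beta>)) < (\<integral>\<^sup>+y. G y * indicator (B i) y \<partial>lebesgue)}"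
  have rad: "0 < rad i \<and> rad i \<le> r" for i
    using \<open>0 < r\<close> by (simp add: rad_def divide_le_eq)
  have "{x. \<not> dyadic_mass_decay \<beta> r G x} \<subseteq> (\<Union>i\<in>K. ball (fst i) (rad i))"
  proof
    fix x assume "x \<in> {x. \<not> dyadic_mass_decay \<beta> r G x}"
    then obtain k where "(x, k) \<in> K" by (auto simp: dyadic_mass_decay_def K_def B_def rad_def not_le)
    then show "x \<in> (\<Union>i\<in>K. ball (fst i) (rad i))" using rad[of "(x, k)"] by force
  qed
  then obtain C where C: "countable C" "C \<subseteq> K"
     "pairwise (\<lambda>i j. disjnt (B i) (B j)) C"
     "{x. \<not> dyadic_mass_decay \<beta> r G x} \<subseteq> (\<Union>i\<in>C. ball (fst i) (5 * rad i))"
    unfolding B_def using rad by (rule Vitali_covering_lemma_balls) blast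
  show ?thesis
  proof (rule hausdorff_content_le_countable_cover[OF \<open>0 < \<beta>\<close> C(1) _ C(4)])
    show "\<And>i. 0 < 5 * rad i" using rad by simp
    fix J assume J: "finite J" "J \<subseteq> C"
    \<comment> \<open>The chosen balls are disjoint, so their \<open>G\<close>-masses, each exceeding \<open>2 powr (- k \<beta>)\<close>, add up to at most 1.\<close>
    have "(\<Sum>i\<in>J. ennreal (2 powr (- real (snd i) * \<beta>))) \<le> (\<Sum>i\<in>J. \<integral>\<^sup>+y. G y * indicator (B i) y \<partial>lebesgue)"
      using J C(2) by (intro sum_mono) (auto simp: K_def less_imp_le)
    also have "\<dots> = (\<integral>\<^sup>+y. (\<Sum>i\<in>J. G y * indicator (B i) y) \<partial>lebesgue)"
      using G by (intro nn_integral_sum[symmetric] borel_measurable_times_ennreal borel_measurable_indicator)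
        (auto simp: B_def)
    also have "\<dots> = (\<integral>\<^sup>+y. G y * indicator (\<Union>(B ` J)) y \<partial>lebesgue)"
    proof -
      have "disjoint_family_on B J"
        using C(3) J(2) unfolding disjoint_family_on_def pairwise_def disjnt_def by blast
      then show ?thesis using J(1) by (simp add: sum_distrib_left[symmetric] indicator_UN_disjoint)
    qed
    also have "\<dots> \<le> integral\<^sup>N lebesgue G"
      by (intro nn_integral_mono) (auto simp: indicator_def)
    finally have "(\<Sum>i\<in>J. ennreal (2 powr (- real (snd i) * \<beta>))) \<le> 1"
      using \<open>integral\<^sup>N lebesgue G \<le> 1\<close> by (rule order_trans)
    then have "(\<Sum>i\<in>J. 2 powr (- real (snd i) * \<beta>)) \<le> 1"
      by (simp add: sum_ennreal ennreal_le_1)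
    moreover have "(5 * rad i) powr \<beta> = (5 * r) powr \<beta> * 2 powr (- real (snd i) * \<beta>)" for i
      using \<open>0 < r\<close> by (simp add: rad_def powr_divide powr_minus_divide powr_realpow[symmetric] powr_powr)
    ultimately show "(\<Sum>i\<in>J. omega_const \<beta> * (5 * rad i) powr \<beta>) \<le> omega_const \<beta> * (5 * r) powr \<beta>"
      using omega_const_pos[OF \<open>0 < \<beta>\<close>] \<open>0 < r\<close>
      by (simp add: sum_distrib_left[symmetric] mult.assoc mult_le_cancel_left1)
  qed
qed

lemma Youngs_inequality_weighted:
  fixes p q \<sigma> u w :: real
  assumes "1 < p" "1 < q" "1 / p + 1 / q = 1" "0 < \<sigma>" "0 \<le> u" "0 \<le> w"
  shows "u * w \<le> \<sigma> powr (1 - p) * u powr p + \<sigma> * w powr q"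
proof -
  have "- (1 / q) * p = 1 - p"
    using assms(1-3) by (simp add: field_simps)
  then have u_part: "(\<sigma> powr (- (1 / q)) * u) powr p = \<sigma> powr (1 - p) * u powr p"
    using assms by (simp add: powr_mult powr_powr)
  have w_part: "(\<sigma> powr (1 / q) * w) powr q = \<sigma> * w powr q"
    using assms by (simp add: powr_mult powr_powr)
  have "u * w = (\<sigma> powr (- (1 / q)) * u) * (\<sigma> powr (1 / q) * w)"
    using assms by (simp add: powr_minus field_simps)
  also have "\<dots> \<le> (\<sigma> powr (1 - p) * u powr p) / p + (\<sigma> * w powr q) / q"
    using Youngs_inequality[of p q "\<sigma> powr (- (1 / q)) * u" "\<sigma> powr (1 / q) * w"] assms
    by (simp add: u_part w_part)
  also have "\<dots> \<le> \<sigma> powr (1 - p) * u powr p + \<sigma> * w powr q"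
    using assms by (intro add_mono) (simp_all add: divide_le_eq mult_le_cancel_left1 not_less)
  finally show ?thesis .
qed

definition dyadic_annulus :: "'a::metric_space \<Rightarrow> real \<Rightarrow> 'a set" where
  "dyadic_annulus x r = ball x r - ball x (r / 2)"

lemma disjoint_family_dyadic_annuli:
  assumes "0 < D"
  shows "disjoint_family (\<lambda>n. dyadic_annulus x (D / 2 ^ n))"
proof -
  have "dyadic_annulus x (D / 2 ^ m) \<inter> dyadic_annulus x (D / 2 ^ n) = {}" if "m < n" for m n :: nat
  proof -
    have "D / 2 ^ n \<le> D / 2 ^ Suc m"
      using assms that by (intro divide_left_mono power_increasing) auto
    then show ?thesis by (auto simp: dyadic_annulus_def)
  qed
  then show ?thesis
    unfolding disjoint_family_on_def by (metis Int_commute linorder_neqE_nat)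
qed

lemma UN_dyadic_annuli:
  assumes "0 < D"
  shows "(\<Union>n. dyadic_annulus x (D / 2 ^ n)) = ball x D - {x}"
proof
  show "(\<Union>n. dyadic_annulus x (D / 2 ^ n)) \<subseteq> ball x D - {x}"
    using assms by (auto simp: dyadic_annulus_def divide_le_eq order_less_le_trans)
next
  show "ball x D - {x} \<subseteq> (\<Union>n. dyadic_annulus x (D / 2 ^ n))"
  proof
    fix y assume y: "y \<in> ball x D - {x}"
    then have "0 < dist x y" by auto
    obtain k :: nat where "D / dist x y < 2 ^ k"
      using real_arch_pow[of 2 "D / dist x y"] by auto
    then have "D / 2 ^ k < dist x y"
      using \<open>0 < dist x y\<close> by (simp add: field_simps)
    moreover have "D / 2 ^ Suc k \<le> D / 2 ^ k"
      using assms by (intro divide_left_mono) auto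
    ultimately have "\<exists>n. D / 2 ^ Suc n \<le> dist x y"
      by (intro exI[of _ k]) simp
    define n where "n = (LEAST n. D / 2 ^ Suc n \<le> dist x y)"
    have "D / 2 ^ Suc n \<le> dist x y"
      unfolding n_def by (rule LeastI_ex) fact
    moreover have "dist x y < D / 2 ^ n"
    proof (cases n)
      case (Suc m)
      then have "\<not> D / 2 ^ Suc m \<le> dist x y"
        using not_less_Least[of m "\<lambda>n. D / 2 ^ Suc n \<le> dist x y"] n_def by auto
      then show ?thesis using Suc by simp
    qed (use y in auto)
    ultimately show "y \<in> (\<Union>n. dyadic_annulus x (D / 2 ^ n))"
      by (auto simp: dyadic_annulus_def)
  qed
qed

lemma suminf_nn_integral_dyadic_annuli:
  fixes g :: "'a::euclidean_space \<Rightarrow> ennreal"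
  assumes "0 < D" and [measurable]: "g \<in> borel_measurable lebesgue"
  shows "(\<Sum>n. \<integral>\<^sup>+y. g y * indicator (dyadic_annulus x (D / 2 ^ n)) y \<partial>lebesgue)
    = (\<integral>\<^sup>+y. g y * indicator (ball x D - {x}) y \<partial>lebesgue)"
proof -
  have [measurable]: "dyadic_annulus x r \<in> sets lebesgue" for r
    by (simp add: dyadic_annulus_def)
  have "(\<Sum>n. \<integral>\<^sup>+y. g y * indicator (dyadic_annulus x (D / 2 ^ n)) y \<partial>lebesgue)
      = (\<integral>\<^sup>+y. (\<Sum>n. g y * indicator (dyadic_annulus x (D / 2 ^ n)) y) \<partial>lebesgue)"
    by (rule nn_integral_suminf[symmetric]) measurable
  then show ?thesis
    using assms by (simp add: suminf_cmult_indicator suminf_indicator disjoint_family_dyadic_annuli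
        UN_dyadic_annuli)
qed

lemma emeasure_lebesgue_ball:
  fixes c :: "'a::euclidean_space"
  assumes "0 \<le> r"
  shows "emeasure lebesgue (ball c r) = ennreal (r ^ DIM('a) * measure lebesgue (ball (0::'a) 1))"
proof -
  have "emeasure lebesgue (ball c r) = ennreal (r ^ DIM('a)) * emeasure lebesgue (ball (0::'a) 1)"
    using assms by (rule emeasure_lebesgue_ball_conv_unit_ball)
  also have "emeasure lebesgue (ball (0::'a) 1) = ennreal (measure lebesgue (ball (0::'a) 1))"
    using emeasure_lborel_ball_finite[of "0::'a" 1] by (subst emeasure_eq_ennreal_measure) auto
  finally show ?thesis
    using assms by (simp add: ennreal_mult)
qed

lemma riesz_kernel_le_on_dyadic_annulus:
  fixes x y :: "'a::euclidean_space"
  assumes "0 < \<alpha>" "\<alpha> < real DIM('a)" "0 < \<sigma>" "y \<in> dyadic_annulus x r"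
  shows "\<bar>v\<bar> / norm (x - y) powr (real DIM('a) - \<alpha>)
    \<le> \<sigma> powr (1 - real DIM('a) / \<alpha>) * \<bar>v\<bar> powr (real DIM('a) / \<alpha>) + \<sigma> * (r / 2) powr (- real DIM('a))"
proof -
  define N where "N = real DIM('a)"
  define q where "q = N / (N - \<alpha>)"
  define d where "d = norm (x - y)"
  have "0 < N" by (simp add: N_def)
  have "r / 2 \<le> d" "0 < r"
    using assms(4) by (auto simp: dyadic_annulus_def dist_norm d_def)
  have "\<bar>v\<bar> / d powr (N - \<alpha>) = \<bar>v\<bar> * d powr (\<alpha> - N)"
    using powr_minus_divide[of d "N - \<alpha>"] by simp
  also have "\<dots> \<le> \<sigma> powr (1 - N / \<alpha>) * \<bar>v\<bar> powr (N / \<alpha>) + \<sigma> * (d powr (\<alpha> - N)) powr q"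
    unfolding q_def N_def using assms by (intro Youngs_inequality_weighted) (auto simp: field_simps)
  also have "(d powr (\<alpha> - N)) powr q = d powr (- N)"
  proof -
    have "(\<alpha> - N) * q = - N"
      using assms(2) by (simp add: q_def N_def field_simps)
    then show ?thesis by (simp add: powr_powr)
  qed
  also have "d powr (- N) \<le> (r / 2) powr (- N)"
    using \<open>r / 2 \<le> d\<close> \<open>0 < r\<close> \<open>0 < N\<close> by (intro powr_mono2') auto
  finally show ?thesis
    using \<open>0 < \<sigma>\<close> by (simp add: N_def d_def mult_left_mono)
qed

lemma nn_integral_riesz_kernel_dyadic_annulus_le:
  fixes F :: "'a::euclidean_space \<Rightarrow> real"
  assumes F: "F \<in> borel_measurable lebesgue"
    and "0 < \<alpha>" "\<alpha> < real DIM('a)" "0 < r" "0 < \<sigma>"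
  shows "(\<integral>\<^sup>+y. ennreal (\<bar>F y\<bar> / norm (x - y) powr (real DIM('a) - \<alpha>)) * indicator (dyadic_annulus x r) y \<partial>lebesgue)
    \<le> ennreal (\<sigma> powr (1 - real DIM('a) / \<alpha>))
        * (\<integral>\<^sup>+y. ennreal (\<bar>F y\<bar> powr (real DIM('a) / \<alpha>)) * indicator (dyadic_annulus x r) y \<partial>lebesgue)
      + ennreal (\<sigma> * 2 ^ DIM('a) * measure lebesgue (ball (0::'a) 1))"
proof -
  define N where "N = real DIM('a)"
  define p where "p = N / \<alpha>"
  define T where "T = dyadic_annulus x r"
  define V where "V = measure lebesgue (ball (0::'a) 1)"
  define a where "a = \<sigma> powr (1 - p)"
  define b where "b = \<sigma> * (r / 2) powr (- N)"
  have [measurable]: "T \<in> sets lebesgue" by (simp add: T_def dyadic_annulus_def)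
  note [measurable] = F
  have "0 \<le> a" "0 \<le> b" "0 \<le> V" by (simp_all add: a_def b_def V_def \<open>0 < \<sigma>\<close> less_imp_le)
  have measure_T: "emeasure lebesgue T \<le> ennreal (r ^ DIM('a) * V)"
  proof -
    have "emeasure lebesgue T \<le> emeasure lebesgue (ball x r)"
      by (rule emeasure_mono) (auto simp: T_def dyadic_annulus_def)
    also have "\<dots> = ennreal (r ^ DIM('a) * V)"
      unfolding V_def using \<open>0 < r\<close> by (intro emeasure_lebesgue_ball) simp
    finally show ?thesis .
  qed
  have "(\<integral>\<^sup>+y. ennreal (\<bar>F y\<bar> / norm (x - y) powr (N - \<alpha>)) * indicator T y \<partial>lebesgue)
      \<le> (\<integral>\<^sup>+y. ennreal a * (ennreal (\<bar>F y\<bar> powr p) * indicator T y) + ennreal b * indicator T y \<partial>lebesgue)"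
  proof (intro nn_integral_mono)
    fix y show "ennreal (\<bar>F y\<bar> / norm (x - y) powr (N - \<alpha>)) * indicator T y
        \<le> ennreal a * (ennreal (\<bar>F y\<bar> powr p) * indicator T y) + ennreal b * indicator T y"
    proof (cases "y \<in> T")
      case True
      then have "ennreal (\<bar>F y\<bar> / norm (x - y) powr (N - \<alpha>)) \<le> ennreal (a * \<bar>F y\<bar> powr p + b)"
        using riesz_kernel_le_on_dyadic_annulus[OF assms(2,3,5)]
        by (intro ennreal_leI) (simp add: T_def a_def b_def p_def N_def)
      then show ?thesis
        using True \<open>0 \<le> a\<close> \<open>0 \<le> b\<close> by (simp add: ennreal_mult)
    qed simp
  qed
  also have "\<dots> = (\<integral>\<^sup>+y. ennreal a * (ennreal (\<bar>F y\<bar> powr p) * indicator T y) \<partial>lebesgue)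
      + (\<integral>\<^sup>+y. ennreal b * indicator T y \<partial>lebesgue)"
    by (rule nn_integral_add; measurable)
  also have "\<dots> = ennreal a * (\<integral>\<^sup>+y. ennreal (\<bar>F y\<bar> powr p) * indicator T y \<partial>lebesgue)
      + ennreal b * emeasure lebesgue T"
    by (simp add: nn_integral_cmult nn_integral_cmult_indicator)
  also have "\<dots> \<le> ennreal a * (\<integral>\<^sup>+y. ennreal (\<bar>F y\<bar> powr p) * indicator T y \<partial>lebesgue)
      + ennreal b * ennreal (r ^ DIM('a) * V)"
    using measure_T by (intro add_mono mult_left_mono) auto
  also have "ennreal b * ennreal (r ^ DIM('a) * V) = ennreal (\<sigma> * 2 ^ DIM('a) * V)"
  proof -
    have "(r / 2) powr (- N) * r ^ DIM('a) = 2 ^ DIM('a)"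
      using \<open>0 < r\<close> by (simp add: N_def powr_minus_divide powr_realpow field_simps)
    then show ?thesis
      using \<open>0 \<le> b\<close> \<open>0 \<le> V\<close> \<open>0 < r\<close> by (simp add: b_def ennreal_mult[symmetric] mult_ac)
  qed
  finally show ?thesis
    by (simp add: N_def p_def a_def T_def V_def mult_left_mono)
qed

lemma young_weights_initial_sum_le:
  fixes G :: "nat \<Rightarrow> ennreal" and p V :: real
  assumes "1 < p" "0 \<le> V" "1 \<le> M" "(\<Sum>n<M. G n) \<le> 1"
  shows "(\<Sum>n<M. ennreal ((real M powr (- 1 / p)) powr (1 - p)) * G n + ennreal (real M powr (- 1 / p) * V))
    \<le> ennreal ((1 + V) * real M powr ((p - 1) / p))"
proof -
  define a where "a = real M powr ((p - 1) / p)"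
  have "- 1 / p * (1 - p) = (p - 1) / p"
    using \<open>1 < p\<close> by (simp add: field_simps)
  then have "(real M powr (- 1 / p)) powr (1 - p) = a"
    by (simp add: a_def powr_powr)
  moreover have "real M * real M powr (- 1 / p) = a"
  proof -
    have "real M * real M powr (- 1 / p) = real M powr (1 + - 1 / p)"
      using \<open>1 \<le> M\<close> by (intro powr_mult_base) simp
    also have "1 + - 1 / p = (p - 1) / p"
      using \<open>1 < p\<close> by (simp add: field_simps)
    finally show ?thesis by (simp add: a_def)
  qed
  ultimately have "(\<Sum>n<M. ennreal ((real M powr (- 1 / p)) powr (1 - p)) * G n + ennreal (real M powr (- 1 / p) * V))
      = ennreal a * (\<Sum>n<M. G n) + ennreal (a * V)"
    using \<open>0 \<le> V\<close> by (simp add: sum.distrib sum_distrib_left ennreal_of_nat_eq_real_of_nat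
        ennreal_mult'[symmetric] mult.assoc[symmetric])
  also have "\<dots> \<le> ennreal a + ennreal (a * V)"
    using mult_left_mono[OF \<open>(\<Sum>n<M. G n) \<le> 1\<close>, of "ennreal a"] by (simp add: add_right_mono)
  also have "\<dots> = ennreal ((1 + V) * a)"
    using \<open>0 \<le> V\<close> by (simp add: a_def ennreal_plus[symmetric] algebra_simps del: ennreal_plus)
  finally show ?thesis by (simp add: a_def)
qed

lemma young_weights_tail_sum_le:
  fixes G :: "nat \<Rightarrow> ennreal" and p \<beta> V :: real
  assumes "1 < p" "0 < \<beta>" "0 \<le> V" and G: "\<And>k. G k \<le> ennreal (2 powr (- real k * \<beta>))"
  shows "(\<Sum>k. ennreal ((2 powr (- real k * \<beta> / p)) powr (1 - p)) * G k + ennreal (2 powr (- real k * \<beta> / p) * V))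
    \<le> ennreal ((1 + V) / (1 - 2 powr (- \<beta> / p)))"
proof -
  define \<rho> where "\<rho> = 2 powr (- \<beta> / p)"
  have "0 < \<rho>" "\<rho> < 1"
    using assms by (auto simp: \<rho>_def powr_less_one)
  have \<rho>_power: "\<rho> ^ k = 2 powr (- real k * \<beta> / p)" for k
    using \<open>0 < \<rho>\<close> by (simp add: \<rho>_def powr_realpow[symmetric] powr_powr mult.commute)
  \<comment> \<open>The weight \<open>2 powr (- k \<beta> / p)\<close> balances the two Young terms: both become multiples of \<open>\<rho> ^ k\<close>.\<close>
  have term_le: "ennreal ((2 powr (- real k * \<beta> / p)) powr (1 - p)) * G k + ennreal (2 powr (- real k * \<beta> / p) * V)
      \<le> ennreal ((1 + V) * \<rho> ^ k)" for k
  proof -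
    have "(2 powr (- real k * \<beta> / p)) powr (1 - p) * 2 powr (- real k * \<beta>) = \<rho> ^ k"
    proof -
      have "- real k * \<beta> / p * (1 - p) + - real k * \<beta> = - real k * \<beta> / p"
        using \<open>1 < p\<close> by (simp add: field_simps)
      then show ?thesis by (simp add: \<rho>_power powr_powr powr_add[symmetric])
    qed
    then have "ennreal ((2 powr (- real k * \<beta> / p)) powr (1 - p)) * G k \<le> ennreal (\<rho> ^ k)"
      using mult_left_mono[OF G[of k], of "ennreal ((2 powr (- real k * \<beta> / p)) powr (1 - p))"]
      by (simp add: ennreal_mult[symmetric])
    then have "ennreal ((2 powr (- real k * \<beta> / p)) powr (1 - p)) * G k + ennreal (2 powr (- real k * \<beta> / p) * V)
        \<le> ennreal (\<rho> ^ k) + ennreal (\<rho> ^ k * V)"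
      by (rule add_mono) (simp add: \<rho>_power)
    also have "\<dots> = ennreal ((1 + V) * \<rho> ^ k)"
      using \<open>0 \<le> V\<close> \<open>0 < \<rho>\<close> by (simp add: ennreal_plus[symmetric] algebra_simps del: ennreal_plus)
    finally show ?thesis .
  qed
  have "summable (\<lambda>k. (1 + V) * \<rho> ^ k)"
    using \<open>0 < \<rho>\<close> \<open>\<rho> < 1\<close> by (intro summable_mult) simp
  then have "(\<Sum>k. ennreal ((1 + V) * \<rho> ^ k)) = ennreal (\<Sum>k. (1 + V) * \<rho> ^ k)"
    using \<open>0 \<le> V\<close> \<open>0 < \<rho>\<close> by (intro suminf_ennreal2) auto
  also have "(\<Sum>k. (1 + V) * \<rho> ^ k) = (1 + V) / (1 - \<rho>)"
    using \<open>0 < \<rho>\<close> \<open>\<rho> < 1\<close> by (simp add: suminf_mult suminf_geometric)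
  finally show ?thesis
    using term_le by (metis (no_types, lifting) \<rho>_def suminf_le summableI)
qed

lemma dyadic_young_weights:
  fixes G :: "nat \<Rightarrow> ennreal" and p \<beta> V :: real
  assumes "1 < p" "0 < \<beta>" "0 \<le> V" "1 \<le> M" "(\<Sum>n<M. G n) \<le> 1"
    and "\<And>k. G (k + M) \<le> ennreal (2 powr (- real k * \<beta>))"
  obtains \<sigma> where "\<And>n. 0 < \<sigma> n"
    "(\<Sum>n. ennreal (\<sigma> n powr (1 - p)) * G n + ennreal (\<sigma> n * V))
       \<le> ennreal ((1 + V) * (real M powr ((p - 1) / p) + 1 / (1 - 2 powr (- \<beta> / p))))"
proof
  define \<sigma> where "\<sigma> n = (if n < M then real M powr (- 1 / p) else 2 powr (- real (n - M) * \<beta> / p))" for n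
  show "0 < \<sigma> n" for n
    using \<open>1 \<le> M\<close> by (simp add: \<sigma>_def)
  define w where "w n = ennreal (\<sigma> n powr (1 - p)) * G n + ennreal (\<sigma> n * V)" for n
  have "(\<Sum>n. w n) = (\<Sum>k. w (k + M)) + (\<Sum>n<M. w n)"
    by (rule suminf_offset) simp
  also have "(\<Sum>k. w (k + M)) \<le> ennreal ((1 + V) / (1 - 2 powr (- \<beta> / p)))"
    unfolding w_def \<sigma>_def using young_weights_tail_sum_le[of p \<beta> V "\<lambda>k. G (k + M)"] assms by simp
  also have "(\<Sum>n<M. w n) \<le> ennreal ((1 + V) * real M powr ((p - 1) / p))"
    unfolding w_def \<sigma>_def using young_weights_initial_sum_le[of p V M G] assms by simp
  also have "ennreal ((1 + V) / (1 - 2 powr (- \<beta> / p))) + ennreal ((1 + V) * real M powr ((p - 1) / p))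
      = ennreal ((1 + V) * (real M powr ((p - 1) / p) + 1 / (1 - 2 powr (- \<beta> / p))))"
  proof -
    have "2 powr (- \<beta> / p) < 1"
      using assms by (simp add: powr_less_one)
    then have "0 \<le> (1 + V) / (1 - 2 powr (- \<beta> / p))"
      using \<open>0 \<le> V\<close> by simp
    then show ?thesis
      using \<open>0 \<le> V\<close> by (simp add: ennreal_plus[symmetric] algebra_simps del: ennreal_plus)
  qed
  finally show "(\<Sum>n. ennreal (\<sigma> n powr (1 - p)) * G n + ennreal (\<sigma> n * V))
      \<le> ennreal ((1 + V) * (real M powr ((p - 1) / p) + 1 / (1 - 2 powr (- \<beta> / p))))"
    by (simp add: w_def add_mono)
qed

lemma nn_integral_riesz_kernel_le_dyadic_sum:
  fixes F :: "'a::euclidean_space \<Rightarrow> real"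
  assumes F: "F \<in> borel_measurable lebesgue"
    and "0 < \<alpha>" "\<alpha> < real DIM('a)" "0 < D" "\<And>n. 0 < \<sigma> n"
    and supp: "\<And>y. F y \<noteq> 0 \<Longrightarrow> dist x y < D"
  shows "(\<integral>\<^sup>+y. ennreal (\<bar>F y\<bar> / norm (x - y) powr (real DIM('a) - \<alpha>)) \<partial>lebesgue)
    \<le> (\<Sum>n. ennreal (\<sigma> n powr (1 - real DIM('a) / \<alpha>))
          * (\<integral>\<^sup>+y. ennreal (\<bar>F y\<bar> powr (real DIM('a) / \<alpha>)) * indicator (dyadic_annulus x (D / 2 ^ n)) y \<partial>lebesgue)
        + ennreal (\<sigma> n * 2 ^ DIM('a) * measure lebesgue (ball (0::'a) 1)))"
proof -
  define h where "h y = ennreal (\<bar>F y\<bar> / norm (x - y) powr (real DIM('a) - \<alpha>))" for y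
  note [measurable] = F id_borel_measurable_lebesgue[unfolded id_def]
  have [measurable]: "h \<in> borel_measurable lebesgue"
    unfolding h_def by measurable
  \<comment> \<open>At \<open>y = x\<close> the kernel is \<open>F x / 0 = 0\<close>, and outside \<open>ball x D\<close> the function \<open>F\<close> vanishes.\<close>
  have "h y = h y * indicator (ball x D - {x}) y" for y
    using supp[of y] by (cases "F y = 0") (auto simp: h_def indicator_def)
  then have "(\<integral>\<^sup>+y. h y \<partial>lebesgue) = (\<Sum>n. \<integral>\<^sup>+y. h y * indicator (dyadic_annulus x (D / 2 ^ n)) y \<partial>lebesgue)"
    using \<open>0 < D\<close> by (simp add: suminf_nn_integral_dyadic_annuli)
  also have "\<dots> \<le> (\<Sum>n. ennreal (\<sigma> n powr (1 - real DIM('a) / \<alpha>))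
          * (\<integral>\<^sup>+y. ennreal (\<bar>F y\<bar> powr (real DIM('a) / \<alpha>)) * indicator (dyadic_annulus x (D / 2 ^ n)) y \<partial>lebesgue)
        + ennreal (\<sigma> n * 2 ^ DIM('a) * measure lebesgue (ball (0::'a) 1)))"
    using \<open>0 < D\<close> assms(2,3,5) unfolding h_def
    by (intro suminf_le nn_integral_riesz_kernel_dyadic_annulus_le F) simp_all
  finally show ?thesis by (simp add: h_def)
qed

lemma nn_integral_riesz_kernel_le_of_dyadic_mass_decay:
  fixes F :: "'a::euclidean_space \<Rightarrow> real"
  assumes F: "F \<in> borel_measurable lebesgue"
    and "0 < \<alpha>" "\<alpha> < real DIM('a)" "0 < \<beta>" "0 < D" "1 \<le> M"
    and supp: "\<And>y. F y \<noteq> 0 \<Longrightarrow> dist x y < D"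
    and norm: "(\<integral>\<^sup>+y. ennreal (\<bar>F y\<bar> powr (real DIM('a) / \<alpha>)) \<partial>lebesgue) \<le> 1"
    and decay: "dyadic_mass_decay \<beta> (D / 2 ^ M) (\<lambda>y. ennreal (\<bar>F y\<bar> powr (real DIM('a) / \<alpha>))) x"
  shows "(\<integral>\<^sup>+y. ennreal (\<bar>F y\<bar> / norm (x - y) powr (real DIM('a) - \<alpha>)) \<partial>lebesgue)
    \<le> ennreal ((1 + 2 ^ DIM('a) * measure lebesgue (ball (0::'a) 1))
        * (real M powr ((real DIM('a) - \<alpha>) / real DIM('a)) + 1 / (1 - 2 powr (- \<alpha> * \<beta> / real DIM('a)))))"
proof -
  define N where "N = real DIM('a)"
  define p where "p = N / \<alpha>"
  define V where "V = 2 ^ DIM('a) * measure lebesgue (ball (0::'a) 1)"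
  define T where "T n = dyadic_annulus x (D / 2 ^ n)" for n
  define g where "g y = ennreal (\<bar>F y\<bar> powr p)" for y
  define G where "G n = (\<integral>\<^sup>+y. g y * indicator (T n) y \<partial>lebesgue)" for n
  have "1 < p" using \<open>0 < \<alpha>\<close> \<open>\<alpha> < real DIM('a)\<close> by (simp add: p_def N_def)
  have "(\<Sum>n<M. G n) \<le> 1"
  proof -
    have "(\<Sum>n<M. G n) \<le> (\<Sum>n. G n)" by (rule sum_le_suminf) auto
    also have "\<dots> = (\<integral>\<^sup>+y. g y * indicator (ball x D - {x}) y \<partial>lebesgue)"
      unfolding G_def T_def g_def using \<open>0 < D\<close> F by (intro suminf_nn_integral_dyadic_annuli) measurable
    also have "\<dots> \<le> (\<integral>\<^sup>+y. g y \<partial>lebesgue)"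
      by (intro nn_integral_mono) (auto simp: indicator_def)
    finally show ?thesis using norm by (simp add: g_def p_def N_def)
  qed
  moreover have "G (k + M) \<le> ennreal (2 powr (- real k * \<beta>))" for k
  proof -
    have "T (k + M) \<subseteq> ball x (D / 2 ^ M / 2 ^ k)"
      by (auto simp: T_def dyadic_annulus_def power_add mult.commute)
    then have "G (k + M) \<le> (\<integral>\<^sup>+y. g y * indicator (ball x (D / 2 ^ M / 2 ^ k)) y \<partial>lebesgue)"
      unfolding G_def by (intro nn_integral_mono) (auto simp: indicator_def)
    then show ?thesis
      using decay by (auto simp: dyadic_mass_decay_def g_def p_def N_def intro: order_trans)
  qed
  moreover have "0 \<le> V" by (simp add: V_def)
  ultimately obtain \<sigma> where "\<And>n. 0 < \<sigma> n" and \<sigma>: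
    "(\<Sum>n. ennreal (\<sigma> n powr (1 - p)) * G n + ennreal (\<sigma> n * V))
       \<le> ennreal ((1 + V) * (real M powr ((p - 1) / p) + 1 / (1 - 2 powr (- \<beta> / p))))"
    using dyadic_young_weights[OF \<open>1 < p\<close> \<open>0 < \<beta>\<close> _ \<open>1 \<le> M\<close>] by blast
  have "(\<integral>\<^sup>+y. ennreal (\<bar>F y\<bar> / norm (x - y) powr (N - \<alpha>)) \<partial>lebesgue)
      \<le> (\<Sum>n. ennreal (\<sigma> n powr (1 - p)) * G n + ennreal (\<sigma> n * V))"
    using nn_integral_riesz_kernel_le_dyadic_sum[OF F assms(2,3,5) \<open>\<And>n. 0 < \<sigma> n\<close> supp]
    by (simp add: G_def T_def g_def N_def p_def V_def mult.assoc)
  also note \<sigma>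
  finally have "(\<integral>\<^sup>+y. ennreal (\<bar>F y\<bar> / norm (x - y) powr (N - \<alpha>)) \<partial>lebesgue)
      \<le> ennreal ((1 + V) * (real M powr ((p - 1) / p) + 1 / (1 - 2 powr (- \<beta> / p))))" .
  moreover have "(p - 1) / p = (N - \<alpha>) / N" "- \<beta> / p = - \<alpha> * \<beta> / N"
    using \<open>0 < \<alpha>\<close> by (simp_all add: p_def N_def field_simps)
  ultimately show ?thesis
    by (simp only: N_def V_def)
qed

lemma riesz_gamma_pos: "0 < \<alpha> \<Longrightarrow> \<alpha> < real N \<Longrightarrow> 0 < riesz_gamma N \<alpha>"
  unfolding riesz_gamma_def by (intro divide_pos_pos mult_pos_pos Gamma_real_pos) auto

lemma riesz_potential_abs_le:
  fixes \<Omega> :: "'a::euclidean_space set" and f :: "'a \<Rightarrow> real"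
  assumes F: "(\<lambda>y. indicator \<Omega> y * f y) \<in> borel_measurable lebesgue"
    and "0 < \<alpha>" "\<alpha> < real DIM('a)" "0 \<le> B"
    and bound: "(\<integral>\<^sup>+y. ennreal (\<bar>indicator \<Omega> y * f y\<bar> / norm (x - y) powr (real DIM('a) - \<alpha>)) \<partial>lebesgue) \<le> ennreal B"
  shows "set_integrable lebesgue \<Omega> (riesz_kernel \<alpha> f x)"
    and "\<bar>riesz_potential \<alpha> \<Omega> f x\<bar> \<le> B / riesz_gamma DIM('a) \<alpha>"
proof -
  define k where "k y = indicator \<Omega> y *\<^sub>R riesz_kernel \<alpha> f x y" for y
  have k_eq: "k y = indicator \<Omega> y * f y / norm (x - y) powr (real DIM('a) - \<alpha>)" for y
    by (simp add: k_def riesz_kernel_def)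
  note [measurable] = F id_borel_measurable_lebesgue[unfolded id_def]
  have k_meas: "k \<in> borel_measurable lebesgue"
    unfolding k_eq[abs_def] by measurable
  have norm_k: "(\<integral>\<^sup>+y. ennreal (norm (k y)) \<partial>lebesgue) \<le> ennreal B"
    using bound by (simp add: k_eq abs_mult)
  then have "integrable lebesgue k"
    using k_meas by (intro integrableI_bounded) (auto simp: top.not_eq_extremum intro: le_less_trans)
  then show "set_integrable lebesgue \<Omega> (riesz_kernel \<alpha> f x)"
    by (simp add: set_integrable_def k_def[abs_def])
  have "ennreal (norm (LINT y:\<Omega>|lebesgue. riesz_kernel \<alpha> f x y)) \<le> ennreal B"
    unfolding set_lebesgue_integral_def k_def[symmetric]
    using integral_norm_bound_ennreal[OF \<open>integrable lebesgue k\<close>] norm_k by (rule order_trans)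
  then have "\<bar>LINT y:\<Omega>|lebesgue. riesz_kernel \<alpha> f x y\<bar> \<le> B"
    using \<open>0 \<le> B\<close> by simp
  moreover have "0 < riesz_gamma DIM('a) \<alpha>"
    using assms(2,3) by (rule riesz_gamma_pos)
  ultimately show "\<bar>riesz_potential \<alpha> \<Omega> f x\<bar> \<le> B / riesz_gamma DIM('a) \<alpha>"
    by (simp add: riesz_potential_def abs_mult divide_right_mono)
qed

lemma riesz_superlevel_subset_not_dyadic_mass_decay:
  fixes \<Omega> :: "'a::euclidean_space set" and f :: "'a \<Rightarrow> real"
  assumes F: "(\<lambda>y. indicator \<Omega> y * f y) \<in> borel_measurable lebesgue"
    and norm: "(\<integral>\<^sup>+y. ennreal (\<bar>indicator \<Omega> y * f y\<bar> powr (real DIM('a) / \<alpha>)) \<partial>lebesgue) \<le> 1"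
    and "0 < \<alpha>" "\<alpha> < real DIM('a)" "0 < \<beta>" "0 < D" "1 \<le> M"
    and diam: "\<And>x y. x \<in> \<Omega> \<Longrightarrow> y \<in> \<Omega> \<Longrightarrow> dist x y < D"
    and threshold: "(1 + 2 ^ DIM('a) * measure lebesgue (ball (0::'a) 1))
        * (real M powr ((real DIM('a) - \<alpha>) / real DIM('a)) + 1 / (1 - 2 powr (- \<alpha> * \<beta> / real DIM('a))))
        / riesz_gamma DIM('a) \<alpha> \<le> t"
  shows "riesz_superlevel \<alpha> \<Omega> f t
    \<subseteq> {x. \<not> dyadic_mass_decay \<beta> (D / 2 ^ M) (\<lambda>y. ennreal (\<bar>indicator \<Omega> y * f y\<bar> powr (real DIM('a) / \<alpha>))) x}"
proof (intro subsetI CollectI notI)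
  define B where "B = (1 + 2 ^ DIM('a) * measure lebesgue (ball (0::'a) 1))
      * (real M powr ((real DIM('a) - \<alpha>) / real DIM('a)) + 1 / (1 - 2 powr (- \<alpha> * \<beta> / real DIM('a))))"
  fix x assume x: "x \<in> riesz_superlevel \<alpha> \<Omega> f t"
    and decay: "dyadic_mass_decay \<beta> (D / 2 ^ M) (\<lambda>y. ennreal (\<bar>indicator \<Omega> y * f y\<bar> powr (real DIM('a) / \<alpha>))) x"
  have "x \<in> \<Omega>" using x by (simp add: riesz_superlevel_def)
  then have supp: "dist x y < D" if "indicator \<Omega> y * f y \<noteq> 0" for y
    using diam that by (auto simp: indicator_def split: if_splits)
  from nn_integral_riesz_kernel_le_of_dyadic_mass_decay[OF F assms(3-7) supp norm decay]
  have bound: "(\<integral>\<^sup>+y. ennreal (\<bar>indicator \<Omega> y * f y\<bar> / norm (x - y) powr (real DIM('a) - \<alpha>)) \<partial>lebesgue)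
      \<le> ennreal B"
    by (simp add: B_def)
  have "0 \<le> B"
    using assms(3,5) by (simp add: B_def powr_less_one less_imp_le)
  from riesz_potential_abs_le[OF F assms(3,4) this bound]
  have "set_integrable lebesgue \<Omega> (riesz_kernel \<alpha> f x)" "\<bar>riesz_potential \<alpha> \<Omega> f x\<bar> \<le> t"
    using threshold by (simp_all add: B_def)
  then show False using x by (auto simp: riesz_superlevel_def)
qed

lemma hausdorff_content_riesz_superlevel_le:
  fixes \<Omega> :: "'a::euclidean_space set" and f :: "'a \<Rightarrow> real"
  assumes "\<Omega> \<in> sets lebesgue" and f: "f \<in> borel_measurable (lebesgue_on \<Omega>)"
    and norm: "(\<integral>\<^sup>+y\<in>\<Omega>. ennreal (\<bar>f y\<bar> powr (real DIM('a) / \<alpha>)) \<partial>lebesgue) \<le> 1"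
    and "0 < \<alpha>" "\<alpha> < real DIM('a)" "0 < \<beta>" "0 < R" "1 \<le> M" "\<Omega> \<subseteq> ball a R"
    and threshold: "(1 + 2 ^ DIM('a) * measure lebesgue (ball (0::'a) 1))
        * (real M powr ((real DIM('a) - \<alpha>) / real DIM('a)) + 1 / (1 - 2 powr (- \<alpha> * \<beta> / real DIM('a))))
        / riesz_gamma DIM('a) \<alpha> \<le> t"
  shows "hausdorff_content \<beta> (riesz_superlevel \<alpha> \<Omega> f t)
    \<le> ennreal (omega_const \<beta> * (10 * R) powr \<beta> * 2 powr (- real M * \<beta>))"
proof -
  define G where "G = (\<lambda>y. ennreal (\<bar>indicator \<Omega> y * f y\<bar> powr (real DIM('a) / \<alpha>)))"
  have F: "(\<lambda>y. indicator \<Omega> y * f y) \<in> borel_measurable lebesgue"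
    using f \<open>\<Omega> \<in> sets lebesgue\<close> by (subst (asm) borel_measurable_restrict_space_iff) auto
  have "G = (\<lambda>y. ennreal (\<bar>f y\<bar> powr (real DIM('a) / \<alpha>)) * indicator \<Omega> y)"
    by (simp add: fun_eq_iff G_def indicator_def)
  then have "integral\<^sup>N lebesgue G \<le> 1"
    using norm by simp
  have diam: "dist x y < 2 * R" if "x \<in> \<Omega>" "y \<in> \<Omega>" for x y
  proof -
    have "dist a x < R" "dist a y < R"
      using \<open>\<Omega> \<subseteq> ball a R\<close> that by auto
    then show ?thesis
      using dist_triangle[of x y a] by (simp add: dist_commute)
  qed
  have "hausdorff_content \<beta> (riesz_superlevel \<alpha> \<Omega> f t)
      \<le> hausdorff_content \<beta> {x. \<not> dyadic_mass_decay \<beta> (2 * R / 2 ^ M) G x}"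
    unfolding G_def using F \<open>integral\<^sup>N lebesgue G \<le> 1\<close>[unfolded G_def] assms(4-8) diam threshold
    by (intro hausdorff_content_mono riesz_superlevel_subset_not_dyadic_mass_decay) auto
  also have "\<dots> \<le> ennreal (omega_const \<beta> * (5 * (2 * R / 2 ^ M)) powr \<beta>)"
    using \<open>integral\<^sup>N lebesgue G \<le> 1\<close> \<open>0 < \<beta>\<close> \<open>0 < R\<close> F
    by (intro hausdorff_content_not_dyadic_mass_decay_le) (auto simp: G_def)
  also have "(5 * (2 * R / 2 ^ M)) powr \<beta> = (10 * R) powr \<beta> * 2 powr (- real M * \<beta>)"
    using \<open>0 < R\<close> by (simp add: powr_divide powr_minus_divide powr_realpow[symmetric] powr_powr)
  finally show ?thesis by (simp add: mult.assoc)
qed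

lemma dyadic_level_below_threshold:
  fixes A B q \<beta> t :: real
  assumes "0 \<le> A" "0 < B" "1 \<le> q" "0 < \<beta>" "2 * (A + B) < t"
  obtains M :: nat where "1 \<le> M" "A + B * real M powr (1 / q) \<le> t"
    "2 powr (- real M * \<beta>) \<le> 2 powr \<beta> * exp (- (\<beta> * ln 2 / (2 * B) powr q) * t powr q)"
proof
  define s where "s = (t - A) / B"
  have "2 \<le> s" "t / (2 * B) \<le> s"
    using assms by (simp_all add: s_def field_simps)
  have "s \<le> s powr q"
    using \<open>2 \<le> s\<close> \<open>1 \<le> q\<close> powr_mono[of 1 q s] by simp
  define M where "M = nat \<lfloor>s powr q\<rfloor>"
  show "1 \<le> M"
    using \<open>2 \<le> s\<close> \<open>s \<le> s powr q\<close> by (simp add: M_def le_nat_iff)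
  have "real M \<le> s powr q" "s powr q - 1 < real M"
    using \<open>2 \<le> s\<close> \<open>s \<le> s powr q\<close> by (simp_all add: M_def)
  have "real M powr (1 / q) \<le> (s powr q) powr (1 / q)"
    using \<open>real M \<le> s powr q\<close> \<open>1 \<le> q\<close> by (intro powr_mono2) auto
  then show "A + B * real M powr (1 / q) \<le> t"
    using \<open>2 \<le> s\<close> \<open>1 \<le> q\<close> assms by (simp add: powr_powr s_def field_simps)
  have "(s powr q - 1) * \<beta> \<le> real M * \<beta>"
    using \<open>s powr q - 1 < real M\<close> \<open>0 < \<beta>\<close> by (intro mult_right_mono) auto
  then have "2 powr (- real M * \<beta>) \<le> 2 powr (- (s powr q - 1) * \<beta>)"
    by (intro powr_mono) (auto simp: algebra_simps)
  also have "\<dots> = 2 powr \<beta> * exp (- (\<beta> * ln 2 * s powr q))"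
    by (simp add: powr_def exp_add[symmetric] algebra_simps)
  also have "\<beta> * ln 2 * (t / (2 * B)) powr q \<le> \<beta> * ln 2 * s powr q"
    using \<open>t / (2 * B) \<le> s\<close> assms by (intro mult_left_mono powr_mono2) auto
  then have "exp (- (\<beta> * ln 2 * s powr q)) \<le> exp (- (\<beta> * ln 2 / (2 * B) powr q) * t powr q)"
    using assms by (simp add: powr_divide)
  finally show "2 powr (- real M * \<beta>) \<le> 2 powr \<beta> * exp (- (\<beta> * ln 2 / (2 * B) powr q) * t powr q)"
    by simp
qed

lemma exponential_decay_of_dyadic_bounds:
  fixes A B q \<beta> W Z :: real and \<phi> :: "'f \<Rightarrow> real \<Rightarrow> ennreal"
  assumes "0 \<le> A" "0 < B" "1 \<le> q" "0 < \<beta>" "0 < W" "0 < Z"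
    and pos: "\<And>x t. P x t \<Longrightarrow> 0 < t"
    and bounded: "\<And>x t. P x t \<Longrightarrow> \<phi> x t \<le> ennreal Z"
    and dyadic: "\<And>x t M. P x t \<Longrightarrow> 1 \<le> M \<Longrightarrow> A + B * real M powr (1 / q) \<le> t
      \<Longrightarrow> \<phi> x t \<le> ennreal (W * 2 powr (- real M * \<beta>))"
  shows "\<exists>c C. c > 0 \<and> C > 0 \<and> (\<forall>x t. P x t \<longrightarrow> \<phi> x t \<le> ennreal (C * exp (- c * t powr q)))"
proof -
  define c where "c = \<beta> * ln 2 / (2 * B) powr q"
  define T where "T = 2 * (A + B)"
  define C where "C = W * 2 powr \<beta> + Z * exp (c * T powr q)"
  have "0 < c" "0 < C"
    using assms by (simp_all add: c_def C_def add_pos_pos)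
  moreover have "\<phi> x t \<le> ennreal (C * exp (- c * t powr q))" if "P x t" for x t
  proof (cases "t \<le> T")
    case True
    have "Z = Z * exp (c * t powr q) * exp (- c * t powr q)"
      by (simp add: exp_minus field_simps)
    also have "\<dots> \<le> Z * exp (c * T powr q) * exp (- c * t powr q)"
      using True pos[OF that] \<open>0 < c\<close> assms by (intro mult_right_mono mult_left_mono) (auto intro!: powr_mono2)
    also have "\<dots> \<le> C * exp (- c * t powr q)"
      using assms by (intro mult_right_mono) (auto simp: C_def)
    finally show ?thesis
      using bounded[OF that] by (meson ennreal_leI order_trans)
  next
    case False
    then have "2 * (A + B) < t" by (simp add: T_def)
    then obtain M :: nat where "1 \<le> M" "A + B * real M powr (1 / q) \<le> t"
      and "2 powr (- real M * \<beta>) \<le> 2 powr \<beta> * exp (- c * t powr q)"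
      unfolding c_def by (rule dyadic_level_below_threshold[OF assms(1-4)])
    then have "W * 2 powr (- real M * \<beta>) \<le> C * exp (- c * t powr q)"
      using assms by (simp add: C_def mult.assoc distrib_right add_increasing2 mult_left_mono)
    moreover have "\<phi> x t \<le> ennreal (W * 2 powr (- real M * \<beta>))"
      using dyadic[OF that \<open>1 \<le> M\<close>] \<open>A + B * real M powr (1 / q) \<le> t\<close> by blast
    ultimately show ?thesis
      using ennreal_leI order_trans by blast
  qed
  ultimately show ?thesis by blast
qed

theorem theorem1p3:
  fixes \<Omega> :: "'a::euclidean_space set" and \<alpha> \<beta> :: real
  assumes "open \<Omega>" and "bounded \<Omega>"
    and "0 < \<alpha>" and "\<alpha> < real DIM('a)"
    and "0 < \<beta>" and "\<beta> \<le> real DIM('a)"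
  shows "\<exists>c C. c > 0 \<and> C > 0 \<and>
     (\<forall>f :: 'a \<Rightarrow> real. \<forall>t :: real.
        f \<in> borel_measurable (lebesgue_on \<Omega>)
        \<and> (\<integral>\<^sup>+ x \<in> \<Omega>. ennreal (\<bar>f x\<bar> powr (real DIM('a) / \<alpha>)) \<partial>lebesgue) \<le> 1
        \<and> t > 0
        \<longrightarrow> hausdorff_content \<beta> (riesz_superlevel \<alpha> \<Omega> f t)
              \<le> ennreal (C * exp (- c * t powr (real DIM('a) / (real DIM('a) - \<alpha>)))))"
proof -
  obtain R where "0 < R" and \<Omega>_R: "\<Omega> \<subseteq> ball 0 R"
    using \<open>bounded \<Omega>\<close> bounded_subset_ballD by blast
  define K where "K = (1 + 2 ^ DIM('a) * measure lebesgue (ball (0::'a) 1)) / riesz_gamma DIM('a) \<alpha>"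
  define L where "L = 1 / (1 - 2 powr (- \<alpha> * \<beta> / real DIM('a)))"
  have "0 < riesz_gamma DIM('a) \<alpha>" "2 powr (- \<alpha> * \<beta> / real DIM('a)) < 1"
    using assms(3-5) by (auto intro: riesz_gamma_pos powr_less_one)
  then have "0 \<le> K * L" "0 < K"
    by (simp_all add: K_def L_def add_pos_nonneg)
  show ?thesis
  proof (rule exponential_decay_of_dyadic_bounds[of "K * L" K _ \<beta> "omega_const \<beta> * (10 * R) powr \<beta>"
        "omega_const \<beta> * R powr \<beta>"])
    fix f :: "'a \<Rightarrow> real" and t :: real
    assume "f \<in> borel_measurable (lebesgue_on \<Omega>)
      \<and> (\<integral>\<^sup>+ x \<in> \<Omega>. ennreal (\<bar>f x\<bar> powr (real DIM('a) / \<alpha>)) \<partial>lebesgue) \<le> 1 \<and> t > 0"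
    moreover fix M :: nat assume "1 \<le> M" "K * L + K * real M powr (1 / (real DIM('a) / (real DIM('a) - \<alpha>))) \<le> t"
    ultimately show "hausdorff_content \<beta> (riesz_superlevel \<alpha> \<Omega> f t)
        \<le> ennreal (omega_const \<beta> * (10 * R) powr \<beta> * 2 powr (- real M * \<beta>))"
      using \<open>open \<Omega>\<close> assms(3-5) \<open>0 < R\<close> \<Omega>_R
      by (intro hausdorff_content_riesz_superlevel_le)
        (auto simp: K_def L_def add_divide_distrib distrib_left mult.commute)
  next
    fix f :: "'a \<Rightarrow> real" and t :: real
    have "riesz_superlevel \<alpha> \<Omega> f t \<subseteq> ball 0 R"
      using \<Omega>_R by (auto simp: riesz_superlevel_def)
    then show "hausdorff_content \<beta> (riesz_superlevel \<alpha> \<Omega> f t) \<le> ennreal (omega_const \<beta> * R powr \<beta>)"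
      by (rule hausdorff_content_le_ball[OF \<open>0 < \<beta>\<close> \<open>0 < R\<close>])
  qed (use \<open>0 \<le> K * L\<close> \<open>0 < K\<close> \<open>0 < R\<close> assms(3-5) in \<open>auto simp: omega_const_pos\<close>)
qed

end
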